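(* Let $n\ge 2$ and $k\ge 1$ be integers. (a) If $f\in M_{n,k}$, then $\mathcal{M}(n,k)\ge f(1)/f_0$. (b) Let $M\ge 2$ be an integer, let $h:[-1,1]\to[0,+\infty]$ be a potential function, and let $f\in L^{(h)}_{n,k}$. Then $\mathcal{L}_h(n,k,M)\ge M(f_0M-f(1))$. (c) Let $M\ge 2$ be an integer, let $h:[-1,1]\to[0,+\infty]$ be a potential function, and let $f\in U^{(h)}_{n,k}$. Then $\mathcal{U}_h(n,k,M)\le M(f_0M-f(1))$.
   Context: For $n\ge 2$, let $P_i^{(n)}(t)$ be the normalized Gegenbauer polynomials: $P_0^{(n)}=1$, $P_1^{(n)}=t$, and $(i+n-2)P_{i+1}^{(n)}(t)=(2i+n-2)tP_i^{(n)}(t)-iP_{i-1}^{(n)}(t)$ for $i\ge1$. A spherical code is a nonempty finite set $C\subset\mathbb{S}^{n-1}$. Its moments are $M_i(C)=\sum_{x,y\in C}P_i^{(n)}(\langle x,y\rangle)$ for $i\ge1$. $C$ is a spherical $(k,k)$-design if $M_{2i}(C)=0$ for $i=1,\dots,k$. Define: - $\mathcal{M}(n,k)=\min\{|C|: C\subset\mathbb{S}^{n-1}$ is a $(k,k)$-design$\}$. - For $h:[-1,1]\to[0,+\infty]$, the $h$-energy $E_h(C)=\sum_{x,y\in C,\,x\ne y}h(\langle x,y\rangle)$. - $\mathcal{L}_h(n,k,M)=\min\{E_h(C): C\subset\mathbb{S}^{n-1}$ a $(k,k)$-design, $|C|=M\}$ and $\mathcal{U}_h(n,k,M)=\max\{E_h(C)$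 over the same set$\}$. For a real polynomial $f$ of degree $m$, write its Gegenbauer expansion $f(t)=\sum_{i=0}^m f_iP_i^{(n)}(t)$. Define: - $F_{n,k}=\{f: f_0>0,\ f_i\le0$ for $i=1,3,\dots,2k-1$ and for all $i\ge 2k+1\}$. - $G_{n,k}=\{f: f_0>0,\ f_i\ge0$ for $i=1,3,\dots,2k-1$ and for all $i\ge2k+1\}$. - $M_{n,k}=\{f\in F_{n,k}: f(t)\ge0$ for all $t\in[-1,1]\}$. - $L^{(h)}_{n,k}=\{f\in G_{n,k}: f(t)\le h(t)$ for all $t\in[-1,1]\}$. - $U^{(h)}_{n,k}=\{f\in F_{n,k}: f(t)\ge h(t)$ for all $t\in[-1,1]\}$. *)

theory Defs
  imports "HOL-Analysis.Analysis" "HOL-Computational_Algebra.Polynomial" "HOL-Library.Extended_Real"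
begin

fun geg :: "nat \<Rightarrow> nat \<Rightarrow> real poly" where
  "geg n 0 = 1"
| "geg n (Suc 0) = [:0, 1:]"
| "geg n (Suc (Suc i)) =
     smult (1 / (real (Suc i) + real n - 2))
       (smult (2 * real (Suc i) + real n - 2) ([:0, 1:] * geg n (Suc i))
        - smult (real (Suc i)) (geg n i))"

definition geg_coeff :: "nat \<Rightarrow> real poly \<Rightarrow> nat \<Rightarrow> real" where
  "geg_coeff n f = (THE c. (\<forall>i > degree f. c i = 0) \<and>
                         f = (\<Sum>i\<le>degree f. smult (c i) (geg n i)))"

definition spherical_code :: "(real^'n::finite) set \<Rightarrow> bool" where
  "spherical_code C \<longleftrightarrow> finite C \<and> C \<noteq> {} \<and> C \<subseteq> sphere 0 1"

definition moment :: "nat \<Rightarrow> (real^('n::finite)) set \<Rightarrow> real" where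
  "moment i C = (\<Sum>x\<in>C. \<Sum>y\<in>C. poly (geg CARD('n) i) (x \<bullet> y))"

definition kk_design :: "nat \<Rightarrow> (real^'n::finite) set \<Rightarrow> bool" where
  "kk_design k C \<longleftrightarrow> spherical_code C \<and> (\<forall>i\<in>{1..k}. moment (2 * i) C = 0)"

definition min_design_size :: "('n::finite) itself \<Rightarrow> nat \<Rightarrow> ereal" where
  "min_design_size _ k = Inf {ereal (real (card C)) | C :: (real^'n) set. kk_design k C}"

definition h_energy :: "(real \<Rightarrow> ereal) \<Rightarrow> (real^('n::finite)) set \<Rightarrow> ereal" where
  "h_energy h C = (\<Sum>(x, y)\<in>{(x, y). x \<in> C \<and> y \<in> C \<and> x \<noteq> y}. h (x \<bullet> y))"

definition lower_energy :: "('n::finite) itself \<Rightarrow> (real \<Rightarrow> ereal) \<Rightarrow> nat \<Rightarrow> nat \<Rightarrow> ereal" where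
  "lower_energy _ h k M =
     Inf {h_energy h C | C :: (real^'n) set. kk_design k C \<and> card C = M}"

definition upper_energy :: "('n::finite) itself \<Rightarrow> (real \<Rightarrow> ereal) \<Rightarrow> nat \<Rightarrow> nat \<Rightarrow> ereal" where
  "upper_energy _ h k M =
     Sup {h_energy h C | C :: (real^'n) set. kk_design k C \<and> card C = M}"

definition F_class :: "nat \<Rightarrow> nat \<Rightarrow> real poly set" where
  "F_class n k = {f. geg_coeff n f 0 > 0 \<and>
      (\<forall>i. (odd i \<and> i < 2 * k) \<or> i \<ge> 2 * k + 1 \<longrightarrow> geg_coeff n f i \<le> 0)}"

definition G_class :: "nat \<Rightarrow> nat \<Rightarrow> real poly set" where
  "G_class n k = {f. geg_coeff n f 0 > 0 \<and>
      (\<forall>i. (odd i \<and> i < 2 * k) \<or> i \<ge> 2 * k + 1 \<longrightarrow> geg_coeff n f i \<ge> 0)}"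

definition M_class :: "nat \<Rightarrow> nat \<Rightarrow> real poly set" where
  "M_class n k = {f \<in> F_class n k. \<forall>t\<in>{-1..1}. poly f t \<ge> 0}"

definition L_class :: "nat \<Rightarrow> nat \<Rightarrow> (real \<Rightarrow> ereal) \<Rightarrow> real poly set" where
  "L_class n k h = {f \<in> G_class n k. \<forall>t\<in>{-1..1}. ereal (poly f t) \<le> h t}"

definition U_class :: "nat \<Rightarrow> nat \<Rightarrow> (real \<Rightarrow> ereal) \<Rightarrow> real poly set" where
  "U_class n k h = {f \<in> F_class n k. \<forall>t\<in>{-1..1}. ereal (poly f t) \<ge> h t}"

end

(*
  Expand f in the Gegenbauer basis, f = sum_i f_i P_i. For a finite set C on the sphere the sum
  of f(<x,y>) over all pairs (x,y) in C x C equals sum_i f_i M_i(C); the diagonal contributes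
  |C| f(1), and M_0(C) = |C|^2. A (k,k)-design kills M_2, ..., M_2k, and every moment is
  nonnegative, so the sign conditions defining F and G bound sum_i f_i M_i by f_0 |C|^2 from
  above resp. below. Comparing f with 0 or with h on [-1,1] then gives (a), (b) and (c).

  Nonnegativity of the moments is the positive definiteness of P_i. The zonal harmonic
  Z_x(y) = |y|^i P_i(<x,y>/|y|) is harmonic by the Gegenbauer differential equation, and
  harmonic forms are orthogonal to |y|^2 q for the Fischer inner product, because the Laplacian
  is adjoint to multiplication by |y|^2. Hence <Z_x, Z_y> is a positive multiple of P_i(<x,y>),
  and M_i(C) is a positive multiple of the Fischer norm of the sum of the Z_x over x in C.
*)

theory Submission
  imports Defs
begin

section \<open>Gegenbauer polynomials\<close>

lemma geg_recurrence:
  assumes "1 \<le> i" "2 \<le> n"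
  shows "smult (real i + real n - 2) (geg n (Suc i)) =
    smult (2 * real i + real n - 2) ([:0, 1:] * geg n i) - smult (real i) (geg n (i - 1))"
proof -
  obtain j where "i = Suc j" using assms by (cases i) auto
  moreover have "real i + real n - 2 \<noteq> 0" using assms by linarith
  ultimately show ?thesis by simp
qed

lemma coeff_geg_Suc_Suc:
  "coeff (geg n (Suc (Suc i))) m = 1 / (real (Suc i) + real n - 2) *
     ((2 * real (Suc i) + real n - 2) * (if m = 0 then 0 else coeff (geg n (Suc i)) (m - 1))
      - real (Suc i) * coeff (geg n i) m)"
  by (simp add: mult_pCons_left coeff_pCons split: nat.split)

lemma degree_geg_le: "degree (geg n i) \<le> i"
proof (induction n i rule: geg.induct)
  case (3 n i)
  then show ?case
    by (intro degree_le allI impI) (simp add: coeff_geg_Suc_Suc coeff_eq_0)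
qed simp_all

lemma coeff_geg_odd: "odd (i + m) \<Longrightarrow> coeff (geg n i) m = 0"
proof (induction n i arbitrary: m rule: geg.induct)
  case (3 n i)
  then show ?case by (cases m) (simp_all add: coeff_geg_Suc_Suc)
qed (auto simp: coeff_pCons odd_pos split: nat.split)

lemma lead_coeff_geg_pos:
  assumes "2 \<le> n"
  shows "coeff (geg n i) i > 0"
  using assms
proof (induction n i rule: geg.induct)
  case (3 n i)
  have "real i + real n - 1 > 0" "2 * real i + real n > 0" using "3.prems" by auto
  with 3 show ?case by (simp add: coeff_geg_Suc_Suc coeff_eq_0[OF le_less_trans[OF degree_geg_le]])
qed simp_all

lemma degree_geg: "2 \<le> n \<Longrightarrow> degree (geg n i) = i"
  using lead_coeff_geg_pos[of n i] by (intro antisym degree_geg_le le_degree) auto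

lemma geg_pderiv_identities:
  assumes "1 \<le> i" "2 \<le> n"
  shows "(real i + real n - 3) * t * poly (pderiv (geg n i)) t - real i * poly (pderiv (geg n (i - 1))) t
           = real i * (real i + real n - 3) * poly (geg n i) t
         \<and> (1 - t\<^sup>2) * poly (pderiv (geg n i)) t = real i * (poly (geg n (i - 1)) t - t * poly (geg n i) t)"
  using assms(1)
proof (induction i rule: nat_induct_at_least)
  case base
  then show ?case by (simp add: pderiv_pCons algebra_simps power2_eq_square)
next
  case (Suc i)
  define a where "a = poly (geg n i) t"
  define a' where "a' = poly (pderiv (geg n i)) t"
  define b where "b = poly (geg n (i - 1)) t"
  define b' where "b' = poly (pderiv (geg n (i - 1))) t"
  define c where "c = poly (geg n (Suc i)) t"
  define c' where "c' = poly (pderiv (geg n (Suc i))) t"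
  have B: "(real i + real n - 3) * t * a' - real i * b' = real i * (real i + real n - 3) * a"
    and E: "(1 - t\<^sup>2) * a' = real i * (b - t * a)"
    using Suc.IH unfolding a_def a'_def b_def b'_def by auto
  note rec = geg_recurrence[OF Suc.hyps assms(2)]
  have R: "(real i + real n - 2) * c = (2 * real i + real n - 2) * t * a - real i * b"
    using arg_cong[OF rec, of "\<lambda>p. poly p t"] unfolding a_def b_def c_def by simp
  have "(real i + real n - 2) * c' = (2 * real i + real n - 2) * (a + t * a') - real i * b'"
    using arg_cong[OF rec, of "\<lambda>p. poly (pderiv p) t"] unfolding a_def a'_def b'_def c'_def
    by (simp add: pderiv_smult pderiv_diff pderiv_mult pderiv_pCons algebra_simps)
  with B have D: "(real i + real n - 2) * c' = (real i + 1) * ((real i + real n - 2) * a + t * a')"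
    by (simp add: algebra_simps)
  have nz: "real i + real n - 2 \<noteq> 0" using Suc.hyps assms(2) by linarith
  have "(real i + real n - 2) * ((real (Suc i) + real n - 3) * t * c' - real (Suc i) * a')
      = (real i + real n - 2) * (real (Suc i) * (real (Suc i) + real n - 3) * c)"
    using D R E by (simp add: algebra_simps power2_eq_square) algebra
  moreover have "(real i + real n - 2) * ((1 - t\<^sup>2) * c') = (real i + real n - 2) * (real (Suc i) * (a - t * c))"
    using D R E by (simp add: algebra_simps power2_eq_square) algebra
  ultimately show ?case
    using nz unfolding a_def a'_def c_def c'_def by simp
qed

lemma geg_ode:
  assumes "2 \<le> n"
  shows "[:1, 0, -1:] * pderiv (pderiv (geg n i)) - smult (real n - 1) ([:0, 1:] * pderiv (geg n i))
         + smult (real i * (real i + real n - 2)) (geg n i) = 0"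
    (is "?ode = 0")
proof (cases "i = 0")
  case False
  then have i: "1 \<le> i" by simp
  note identities = geg_pderiv_identities[OF i assms]
  \<comment> \<open>Differentiate the second identity and eliminate \<open>pderiv (geg n (i - 1))\<close> with the first.\<close>
  have "poly ([:1, 0, -1:] * pderiv (geg n i)) = poly (smult (real i) (geg n (i - 1) - [:0, 1:] * geg n i))"
  proof
    fix t
    show "poly ([:1, 0, -1:] * pderiv (geg n i)) t = poly (smult (real i) (geg n (i - 1) - [:0, 1:] * geg n i)) t"
      using identities[of t] by (simp add: algebra_simps power2_eq_square)
  qed
  then have "poly (pderiv ([:1, 0, -1:] * pderiv (geg n i))) t
      = poly (pderiv (smult (real i) (geg n (i - 1) - [:0, 1:] * geg n i))) t" for t
    by (simp add: poly_eq_poly_eq_iff)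
  moreover have "pderiv ([:1, 0, -1:] * q) = [:1, 0, -1:] * pderiv q + [:0, -2:] * q" for q :: "real poly"
    by (simp only: pderiv_mult) (simp add: pderiv_pCons)
  ultimately have E': "(1 - t\<^sup>2) * poly (pderiv (pderiv (geg n i))) t - 2 * t * poly (pderiv (geg n i)) t
      = real i * (poly (pderiv (geg n (i - 1))) t - poly (geg n i) t - t * poly (pderiv (geg n i)) t)" for t
    by (simp add: pderiv_mult pderiv_smult pderiv_diff pderiv_pCons algebra_simps power2_eq_square)
  have pointwise: "(1 - t\<^sup>2) * poly (pderiv (pderiv (geg n i))) t - (real n - 1) * t * poly (pderiv (geg n i)) t
      + real i * (real i + real n - 2) * poly (geg n i) t = 0" for t
    using conjunct1[OF identities[of t]] E'[of t] by (simp add: algebra_simps)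
  have "poly ?ode = poly 0"
  proof
    fix t
    show "poly ?ode t = poly 0 t"
      using pointwise[of t] by (simp add: algebra_simps power2_eq_square)
  qed
  then show ?thesis by (simp add: poly_eq_poly_eq_iff)
qed simp

lemma geg_coeff_recurrence:
  assumes "2 \<le> n"
  shows "real (m + 2) * real (m + 1) * coeff (geg n i) (m + 2)
       = (real m - real i) * (real m + real i + real n - 2) * coeff (geg n i) m"
proof -
  have coeff_quad: "coeff ([:1, 0, -1:] * q) m = coeff q m - (if 2 \<le> m then coeff q (m - 2) else 0)"
    for q :: "real poly" and m
  proof -
    have "[:1, 0, -1:] * q = q - pCons 0 (pCons 0 q)"
      by (simp add: mult_pCons_left algebra_simps)
    then show ?thesis by (cases m; cases "m - 1"; simp)
  qed
  have "coeff ([:1, 0, -1:] * pderiv (pderiv (geg n i)) - smult (real n - 1) ([:0, 1:] * pderiv (geg n i))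
         + smult (real i * (real i + real n - 2)) (geg n i)) m = 0"
    using geg_ode[OF assms] by simp
  then have "real (m + 2) * real (m + 1) * coeff (geg n i) (m + 2) - real m * (real m - 1) * coeff (geg n i) m
     - (real n - 1) * real m * coeff (geg n i) m + real i * (real i + real n - 2) * coeff (geg n i) m = 0"
    by (simp only: coeff_quad coeff_add coeff_diff coeff_smult mult_pCons_left coeff_pderiv)
      (cases m; cases "m - 1"; simp add: coeff_pderiv algebra_simps numeral_2_eq_2)
  then show ?thesis by (simp add: algebra_simps)
qed

lemma geg_lincomb_eq_0D:
  assumes "2 \<le> n" "(\<Sum>i\<le>d. smult (e i) (geg n i)) = 0"
  shows "\<forall>i\<le>d. e i = 0"
  using assms(2)
proof (induction d)
  case (Suc d)
  have "coeff (geg n i) (Suc d) = 0" if "i \<le> d" for i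
    using degree_geg_le[of n i] that by (intro coeff_eq_0) linarith
  then have "coeff (\<Sum>i\<le>d. smult (e i) (geg n i)) (Suc d) = 0"
    unfolding coeff_sum by (intro sum.neutral ballI) simp
  then have "e (Suc d) * coeff (geg n (Suc d)) (Suc d) = 0"
    using arg_cong[OF Suc.prems, of "\<lambda>p. coeff p (Suc d)"] by (simp add: coeff_sum)
  then have "e (Suc d) = 0" using lead_coeff_geg_pos[OF assms(1), of "Suc d"] by simp
  with Suc show ?case by (auto simp: le_Suc_eq)
qed simp

lemma geg_expansion_exists:
  assumes "2 \<le> n" "degree f \<le> d"
  shows "\<exists>c. (\<forall>i>d. c i = 0) \<and> f = (\<Sum>i\<le>d. smult (c i) (geg n i))"
  using assms(2)
proof (induction d arbitrary: f)
  case 0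
  then obtain a where "f = [:a:]" by (metis degree_0_id le_zero_eq)
  then show ?case by (intro exI[of _ "\<lambda>i. if i = 0 then a else 0"]) simp
next
  case (Suc d)
  define a where "a = coeff f (Suc d) / coeff (geg n (Suc d)) (Suc d)"
  have lead: "coeff (geg n (Suc d)) (Suc d) \<noteq> 0"
    using lead_coeff_geg_pos[OF assms(1)] by (metis less_irrefl)
  have "degree (f - smult a (geg n (Suc d))) \<le> d"
  proof (rule degree_le, intro allI impI)
    fix i assume "d < i"
    then consider "i = Suc d" | "Suc d < i" by linarith
    then show "coeff (f - smult a (geg n (Suc d))) i = 0"
      using lead Suc.prems degree_geg[OF assms(1), of "Suc d"]
      by cases (simp_all add: a_def coeff_eq_0)
  qed
  then obtain c where c: "\<forall>i>d. c i = 0" "f - smult a (geg n (Suc d)) = (\<Sum>i\<le>d. smult (c i) (geg n i))"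
    using Suc.IH by blast
  have "(\<Sum>i\<le>d. smult ((c(Suc d := a)) i) (geg n i)) = (\<Sum>i\<le>d. smult (c i) (geg n i))"
    by (intro sum.cong refl) auto
  then have "f = (\<Sum>i\<le>Suc d. smult ((c(Suc d := a)) i) (geg n i))"
    using c(2) by (simp add: algebra_simps)
  moreover have "\<forall>i>Suc d. (c(Suc d := a)) i = 0" using c(1) by auto
  ultimately show ?case by blast
qed

lemma geg_coeff_expansion:
  assumes "2 \<le> n"
  shows "(\<forall>i > degree f. geg_coeff n f i = 0) \<and> f = (\<Sum>i\<le>degree f. smult (geg_coeff n f i) (geg n i))"
proof -
  let ?P = "\<lambda>c. (\<forall>i > degree f. c i = 0) \<and> f = (\<Sum>i\<le>degree f. smult (c i) (geg n i))"
  have "\<exists>!c. ?P c"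
  proof (rule ex_ex1I)
    show "\<exists>c. ?P c" by (rule geg_expansion_exists[OF assms order.refl])
  next
    fix c1 c2 assume p1: "?P c1" and p2: "?P c2"
    have "(\<Sum>i\<le>degree f. smult (c1 i - c2 i) (geg n i))
        = (\<Sum>i\<le>degree f. smult (c1 i) (geg n i)) - (\<Sum>i\<le>degree f. smult (c2 i) (geg n i))"
      by (simp add: smult_diff_left sum_subtractf)
    also have "\<dots> = 0" using p1 p2 by simp
    finally have "\<forall>i\<le>degree f. c1 i - c2 i = 0" by (rule geg_lincomb_eq_0D[OF assms])
    then show "c1 = c2" using p1 p2 by (auto simp: fun_eq_iff) (metis not_le)
  qed
  then show ?thesis unfolding geg_coeff_def by (rule theI')
qed

lemma poly_geg_expansion:
  assumes "2 \<le> n"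
  shows "poly f t = (\<Sum>i\<le>degree f. geg_coeff n f i * poly (geg n i) t)"
proof -
  have "poly f t = poly (\<Sum>i\<le>degree f. smult (geg_coeff n f i) (geg n i)) t"
    using geg_coeff_expansion[OF assms, of f] by metis
  then show ?thesis by (simp add: poly_sum)
qed

section \<open>Forms and the Fischer inner product\<close>

definition mdeg :: "('n::finite \<Rightarrow> nat) \<Rightarrow> nat" where
  "mdeg \<alpha> = (\<Sum>k\<in>UNIV. \<alpha> k)"

definition exponents :: "nat \<Rightarrow> ('n::finite \<Rightarrow> nat) set" where
  "exponents d = {\<alpha>. mdeg \<alpha> = d}"

definition mfact :: "('n::finite \<Rightarrow> nat) \<Rightarrow> real" where
  "mfact \<alpha> = (\<Prod>k\<in>UNIV. fact (\<alpha> k))"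

definition mpow :: "real^'n::finite \<Rightarrow> ('n \<Rightarrow> nat) \<Rightarrow> real" where
  "mpow y \<alpha> = (\<Prod>k\<in>UNIV. (y $ k) ^ \<alpha> k)"

lemma finite_exponents: "finite (exponents d :: ('n::finite \<Rightarrow> nat) set)"
proof (rule finite_subset)
  show "exponents d \<subseteq> Pi\<^sub>E (UNIV :: 'n set) (\<lambda>_. {..d})"
  proof
    fix \<alpha> :: "'n \<Rightarrow> nat" assume "\<alpha> \<in> exponents d"
    then have "\<alpha> k \<le> d" for k
      unfolding exponents_def mdeg_def using member_le_sum[of k UNIV \<alpha>] by auto
    then show "\<alpha> \<in> Pi\<^sub>E UNIV (\<lambda>_. {..d})" by auto
  qed
qed (rule finite_PiE; simp)

lemma exponents_0: "exponents 0 = {(\<lambda>_. 0) :: 'n::finite \<Rightarrow> nat}"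
  unfolding exponents_def mdeg_def by (auto simp: fun_eq_iff)

lemma sum_UNIV_fun_upd:
  fixes \<beta> :: "'n::finite \<Rightarrow> 'b" and g :: "'n \<Rightarrow> 'b \<Rightarrow> 'a::comm_monoid_add"
  shows "(\<Sum>k'\<in>UNIV. g k' ((\<beta>(k := v)) k')) + g k (\<beta> k) = (\<Sum>k'\<in>UNIV. g k' (\<beta> k')) + g k v"
proof -
  have "(\<Sum>k'\<in>UNIV - {k}. g k' ((\<beta>(k := v)) k')) = (\<Sum>k'\<in>UNIV - {k}. g k' (\<beta> k'))"
    by (rule sum.cong) auto
  then show ?thesis
    by (simp add: sum.remove[of UNIV k] ac_simps)
qed

lemma prod_UNIV_fun_upd:
  fixes \<beta> :: "'n::finite \<Rightarrow> 'b" and g :: "'n \<Rightarrow> 'b \<Rightarrow> 'a::comm_monoid_mult"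
  shows "(\<Prod>k'\<in>UNIV. g k' ((\<beta>(k := v)) k')) * g k (\<beta> k) = (\<Prod>k'\<in>UNIV. g k' (\<beta> k')) * g k v"
proof -
  have "(\<Prod>k'\<in>UNIV - {k}. g k' ((\<beta>(k := v)) k')) = (\<Prod>k'\<in>UNIV - {k}. g k' (\<beta> k'))"
    by (rule prod.cong) auto
  then show ?thesis
    by (simp add: prod.remove[of UNIV k] ac_simps)
qed

lemma mdeg_fun_upd_add: "mdeg (\<beta>(k := \<beta> k + c)) = mdeg \<beta> + c"
  using sum_UNIV_fun_upd[of "\<lambda>_ x. x" \<beta> k "\<beta> k + c"] unfolding mdeg_def by simp

lemma mdeg_fun_upd_diff: "c \<le> \<alpha> k \<Longrightarrow> mdeg (\<alpha>(k := \<alpha> k - c)) + c = mdeg \<alpha>"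
  using mdeg_fun_upd_add[of "\<alpha>(k := \<alpha> k - c)" k c] by simp

lemma mfact_pos: "mfact \<alpha> > 0"
  unfolding mfact_def by (rule prod_pos) auto

lemma mfact_neq_0 [simp]: "mfact \<alpha> \<noteq> 0"
  using mfact_pos[of \<alpha>] by simp

lemma mfact_fun_upd_add:
  "mfact (\<beta>(k := \<beta> k + c)) * fact (\<beta> k) = mfact \<beta> * fact (\<beta> k + c)"
  using prod_UNIV_fun_upd[of "\<lambda>_ x. (fact x :: real)" \<beta> k "\<beta> k + c"] unfolding mfact_def by simp

lemma mfact_fun_upd_Suc: "mfact (\<beta>(k := \<beta> k + 1)) = mfact \<beta> * real (\<beta> k + 1)"
proof -
  have "mfact (\<beta>(k := \<beta> k + 1)) * fact (\<beta> k) = (mfact \<beta> * real (\<beta> k + 1)) * fact (\<beta> k)"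
    using mfact_fun_upd_add[of \<beta> k 1] by (simp add: algebra_simps)
  then show ?thesis by simp
qed

lemma mfact_fun_upd_add2: "mfact (\<beta>(k := \<beta> k + 2)) = mfact \<beta> * real (\<beta> k + 1) * real (\<beta> k + 2)"
proof -
  have "mfact (\<beta>(k := \<beta> k + 2)) * fact (\<beta> k) = (mfact \<beta> * real (\<beta> k + 1) * real (\<beta> k + 2)) * fact (\<beta> k)"
    using mfact_fun_upd_add[of \<beta> k 2] by (simp add: numeral_2_eq_2 algebra_simps)
  then show ?thesis by simp
qed

lemma mpow_fun_upd_add: "mpow y (\<beta>(k := \<beta> k + c)) = mpow y \<beta> * (y $ k) ^ c"
proof (cases "y $ k = 0 \<and> c \<noteq> 0")
  case True
  then have "mpow y (\<beta>(k := \<beta> k + c)) = 0"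
    unfolding mpow_def by (intro prod_zero[of UNIV]) (auto intro!: bexI[of _ k])
  then show ?thesis using True by simp
next
  case False
  have "mpow y (\<beta>(k := \<beta> k + c)) * (y $ k) ^ \<beta> k = mpow y \<beta> * (y $ k) ^ (\<beta> k + c)"
    using prod_UNIV_fun_upd[of "\<lambda>k x. (y $ k) ^ x" \<beta> k "\<beta> k + c"] unfolding mpow_def by simp
  then show ?thesis using False by (auto simp: power_add)
qed

lemma sum_exponents_shift:
  "(\<Sum>\<alpha>\<in>exponents (d + c). if c \<le> \<alpha> k then g \<alpha> else (0::real))
     = (\<Sum>\<beta>\<in>exponents d. g (\<beta>(k := \<beta> k + c)))"
proof -
  have "(\<Sum>\<alpha>\<in>exponents (d + c). if c \<le> \<alpha> k then g \<alpha> else 0) = (\<Sum>\<alpha>\<in>{\<alpha>\<in>exponents (d + c). c \<le> \<alpha> k}. g \<alpha>)"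
    by (rule sum.inter_filter[symmetric]) (rule finite_exponents)
  also have "\<dots> = (\<Sum>\<beta>\<in>exponents d. g (\<beta>(k := \<beta> k + c)))"
    by (rule sum.reindex_bij_witness[where j = "\<lambda>\<alpha>. \<alpha>(k := \<alpha> k - c)" and i = "\<lambda>\<beta>. \<beta>(k := \<beta> k + c)"])
      (auto simp: exponents_def mdeg_fun_upd_add dest: mdeg_fun_upd_diff)
  finally show ?thesis .
qed

text \<open>A polynomial on \<open>real^'n\<close> is represented by its coefficient function on exponent
  vectors; \<open>eval_form d\<close> and \<open>fischer d\<close> only read the coefficients of degree \<open>d\<close>.\<close>

type_synonym 'n form = "('n \<Rightarrow> nat) \<Rightarrow> real"

definition homogeneous :: "nat \<Rightarrow> 'n::finite form \<Rightarrow> bool" where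
  "homogeneous d p \<longleftrightarrow> (\<forall>\<alpha>. mdeg \<alpha> \<noteq> d \<longrightarrow> p \<alpha> = 0)"

definition eval_form :: "nat \<Rightarrow> 'n::finite form \<Rightarrow> real^'n \<Rightarrow> real" where
  "eval_form d p y = (\<Sum>\<alpha>\<in>exponents d. p \<alpha> * mpow y \<alpha>)"

definition fischer :: "nat \<Rightarrow> 'n::finite form \<Rightarrow> 'n form \<Rightarrow> real" where
  "fischer d p q = (\<Sum>\<alpha>\<in>exponents d. mfact \<alpha> * p \<alpha> * q \<alpha>)"

definition laplacian :: "'n::finite form \<Rightarrow> 'n form" where
  "laplacian p \<beta> = (\<Sum>k\<in>UNIV. real (\<beta> k + 1) * real (\<beta> k + 2) * p (\<beta>(k := \<beta> k + 2)))"

definition mult_sqnorm :: "'n::finite form \<Rightarrow> 'n form" where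
  "mult_sqnorm q \<alpha> = (\<Sum>k\<in>UNIV. if 2 \<le> \<alpha> k then q (\<alpha>(k := \<alpha> k - 2)) else 0)"

definition mult_inner :: "real^'n::finite \<Rightarrow> 'n form \<Rightarrow> 'n form" where
  "mult_inner x q \<alpha> = (\<Sum>k\<in>UNIV. if 1 \<le> \<alpha> k then x $ k * q (\<alpha>(k := \<alpha> k - 1)) else 0)"

text \<open>The coefficients of \<open>y \<mapsto> (x \<bullet> y) ^ a\<close>, by the multinomial theorem.\<close>

definition inner_pow :: "real^'n::finite \<Rightarrow> nat \<Rightarrow> 'n form" where
  "inner_pow x a \<alpha> = (if mdeg \<alpha> = a then fact a / mfact \<alpha> * mpow x \<alpha> else 0)"

lemma homogeneous_inner_pow: "homogeneous a (inner_pow x a)"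
  unfolding homogeneous_def inner_pow_def by simp

lemma homogeneous_mult_sqnorm:
  fixes q :: "'n::finite form"
  assumes "homogeneous d q"
  shows "homogeneous (d + 2) (mult_sqnorm q)"
  unfolding homogeneous_def
proof (intro allI impI)
  fix \<alpha> :: "'n \<Rightarrow> nat" assume "mdeg \<alpha> \<noteq> d + 2"
  then have "q (\<alpha>(k := \<alpha> k - 2)) = 0" if "2 \<le> \<alpha> k" for k
    using assms mdeg_fun_upd_diff[of 2 \<alpha> k] that unfolding homogeneous_def by force
  then show "mult_sqnorm q \<alpha> = 0" unfolding mult_sqnorm_def by (simp add: sum.neutral)
qed

lemma homogeneous_mult_sqnorm_iter: "homogeneous d q \<Longrightarrow> homogeneous (d + 2 * j) ((mult_sqnorm ^^ j) q)"
  by (induction j) (auto dest: homogeneous_mult_sqnorm simp: add.assoc)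

lemma mult_sqnorm_add_scale:
  "mult_sqnorm (\<lambda>\<gamma>. f \<gamma> + c * g \<gamma>) \<beta> = mult_sqnorm f \<beta> + c * mult_sqnorm g \<beta>"
  unfolding mult_sqnorm_def sum_distrib_left sum.distrib[symmetric] by (intro sum.cong refl) simp

lemma mult_sqnorm_scale: "mult_sqnorm (\<lambda>\<gamma>. c * g \<gamma>) = (\<lambda>\<beta>. c * mult_sqnorm g \<beta>)"
  unfolding mult_sqnorm_def by (auto simp: sum_distrib_left fun_eq_iff intro!: sum.cong)

lemma mult_sqnorm_iter_scale:
  "(mult_sqnorm ^^ j) (\<lambda>\<gamma>. c * g \<gamma>) = (\<lambda>\<beta>. c * (mult_sqnorm ^^ j) g \<beta>)"
  by (induction j) (auto simp: mult_sqnorm_scale)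

lemma laplacian_lincomb:
  "laplacian (\<lambda>\<alpha>. \<Sum>m\<in>S. c m * f m \<alpha>) \<beta> = (\<Sum>m\<in>S. c m * laplacian (f m) \<beta>)"
  unfolding laplacian_def sum_distrib_left by (subst sum.swap) (simp add: algebra_simps)

lemma eval_form_lincomb:
  "eval_form d (\<lambda>\<alpha>. \<Sum>m\<in>S. c m * f m \<alpha>) y = (\<Sum>m\<in>S. c m * eval_form d (f m) y)"
  unfolding eval_form_def sum_distrib_left sum_distrib_right by (subst sum.swap) (simp add: algebra_simps)

lemma fischer_sum_left: "fischer d (\<lambda>\<alpha>. \<Sum>x\<in>S. f x \<alpha>) q = (\<Sum>x\<in>S. fischer d (f x) q)"
  unfolding fischer_def sum_distrib_left sum_distrib_right by (subst sum.swap) (simp add: algebra_simps)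

lemma fischer_sum_right: "fischer d p (\<lambda>\<alpha>. \<Sum>x\<in>S. f x \<alpha>) = (\<Sum>x\<in>S. fischer d p (f x))"
  unfolding fischer_def sum_distrib_left sum_distrib_right by (subst sum.swap) (simp add: algebra_simps)

lemma fischer_scale_right: "fischer d p (\<lambda>\<alpha>. c * f \<alpha>) = c * fischer d p f"
  unfolding fischer_def sum_distrib_left by (simp add: algebra_simps)

lemma fischer_self_nonneg: "fischer d p p \<ge> 0"
proof -
  have "0 \<le> mfact \<alpha> * p \<alpha> * p \<alpha>" for \<alpha>
    using mfact_pos[of \<alpha>] by (simp add: mult.assoc)
  then show ?thesis unfolding fischer_def by (intro sum_nonneg)
qed

lemma fischer_laplacian: "fischer d (laplacian p) q = fischer (d + 2) p (mult_sqnorm q)"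
proof -
  have "fischer d (laplacian p) q
      = (\<Sum>k\<in>UNIV. \<Sum>\<beta>\<in>exponents d. mfact (\<beta>(k := \<beta> k + 2)) * p (\<beta>(k := \<beta> k + 2)) * q \<beta>)"
    unfolding fischer_def laplacian_def sum_distrib_left sum_distrib_right mfact_fun_upd_add2
    by (subst sum.swap) (simp add: algebra_simps)
  also have "\<dots> = (\<Sum>k\<in>UNIV. \<Sum>\<alpha>\<in>exponents (d + 2).
      if 2 \<le> \<alpha> k then mfact \<alpha> * p \<alpha> * q (\<alpha>(k := \<alpha> k - 2)) else 0)"
    by (subst sum_exponents_shift) simp
  also have "\<dots> = fischer (d + 2) p (mult_sqnorm q)"
    unfolding fischer_def mult_sqnorm_def
    by (subst sum.swap) (simp add: sum_distrib_left if_distrib cong: if_cong)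
  finally show ?thesis .
qed

lemma laplacian_mult_sqnorm:
  fixes q :: "'n::finite form"
  shows "laplacian (mult_sqnorm q) \<beta>
    = mult_sqnorm (laplacian q) \<beta> + (2 * real CARD('n) + 4 * real (mdeg \<beta>)) * q \<beta>"
proof -
  define up_down where "up_down l k = real (\<beta> l + 1) * real (\<beta> l + 2) *
      (if 2 \<le> (\<beta>(l := \<beta> l + 2)) k then q ((\<beta>(l := \<beta> l + 2))(k := (\<beta>(l := \<beta> l + 2)) k - 2)) else 0)"
    for l k
  define down_up where "down_up l k = (if 2 \<le> \<beta> k
      then real ((\<beta>(k := \<beta> k - 2)) l + 1) * real ((\<beta>(k := \<beta> k - 2)) l + 2)
        * q ((\<beta>(k := \<beta> k - 2))(l := (\<beta>(k := \<beta> k - 2)) l + 2))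
      else 0)" for l k
  have L: "laplacian (mult_sqnorm q) \<beta> = (\<Sum>l\<in>UNIV. \<Sum>k\<in>UNIV. up_down l k)"
    unfolding laplacian_def mult_sqnorm_def up_down_def by (simp add: sum_distrib_left)
  have "mult_sqnorm (laplacian q) \<beta> = (\<Sum>k\<in>UNIV. \<Sum>l\<in>UNIV. down_up l k)"
    unfolding laplacian_def mult_sqnorm_def down_up_def
    by (intro sum.cong refl, case_tac "2 \<le> \<beta> x") simp_all
  also have "\<dots> = (\<Sum>l\<in>UNIV. \<Sum>k\<in>UNIV. down_up l k)"
    by (rule sum.swap)
  finally have R: "mult_sqnorm (laplacian q) \<beta> = (\<Sum>l\<in>UNIV. \<Sum>k\<in>UNIV. down_up l k)" .
  have D: "up_down l k - down_up l k = (if l = k then (4 * real (\<beta> k) + 2) * q \<beta> else 0)" for l k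
  proof (cases "l = k")
    case True
    then show ?thesis unfolding up_down_def down_up_def
      by (cases "\<beta> k"; cases "\<beta> k - 1"; simp add: algebra_simps fun_upd_idem)
  next
    case False
    then have "(\<beta>(l := \<beta> l + 2))(k := \<beta> k - 2) = (\<beta>(k := \<beta> k - 2))(l := \<beta> l + 2)"
      by (auto simp: fun_eq_iff)
    then show ?thesis unfolding up_down_def down_up_def using False by simp
  qed
  have "laplacian (mult_sqnorm q) \<beta> - mult_sqnorm (laplacian q) \<beta>
      = (\<Sum>l\<in>UNIV. \<Sum>k\<in>UNIV. up_down l k - down_up l k)"
    unfolding L R by (simp add: sum_subtractf)
  also have "\<dots> = (\<Sum>l\<in>UNIV. (4 * real (\<beta> l) + 2) * q \<beta>)"
    unfolding D by simp
  also have "\<dots> = (2 * real CARD('n) + 4 * real (mdeg \<beta>)) * q \<beta>"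
    unfolding mdeg_def by (simp add: sum_distrib_right sum_distrib_left sum.distrib algebra_simps)
  finally show ?thesis by simp
qed

lemma laplacian_mult_sqnorm_iter:
  fixes q :: "'n::finite form"
  assumes "homogeneous d q"
  shows "laplacian ((mult_sqnorm ^^ j) q) \<beta> = (mult_sqnorm ^^ j) (laplacian q) \<beta>
    + real j * (2 * real CARD('n) + 4 * real d + 4 * real j - 4) * (mult_sqnorm ^^ (j - 1)) q \<beta>"
proof (induction j arbitrary: \<beta>)
  case (Suc j)
  define r where "r = (mult_sqnorm ^^ j) q"
  define c where "c = real j * (2 * real CARD('n) + 4 * real d + 4 * real j - 4)"
  have "homogeneous (d + 2 * j) r"
    unfolding r_def by (rule homogeneous_mult_sqnorm_iter[OF assms])
  then have deg: "(2 * real CARD('n) + 4 * real (mdeg \<beta>)) * r \<beta>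
      = (2 * real CARD('n) + 4 * real (d + 2 * j)) * r \<beta>"
    unfolding homogeneous_def by (cases "mdeg \<beta> = d + 2 * j") auto
  have "laplacian r = (\<lambda>\<gamma>. (mult_sqnorm ^^ j) (laplacian q) \<gamma> + c * (mult_sqnorm ^^ (j - 1)) q \<gamma>)"
    unfolding r_def c_def using Suc.IH by auto
  then have "mult_sqnorm (laplacian r) \<beta>
      = (mult_sqnorm ^^ Suc j) (laplacian q) \<beta> + c * mult_sqnorm ((mult_sqnorm ^^ (j - 1)) q) \<beta>"
    by (simp add: mult_sqnorm_add_scale)
  also have "c * mult_sqnorm ((mult_sqnorm ^^ (j - 1)) q) \<beta> = c * r \<beta>"
    unfolding r_def c_def by (cases j) auto
  finally show ?case
    using laplacian_mult_sqnorm[of r \<beta>] deg unfolding r_def c_def by (simp add: algebra_simps)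
qed simp

lemma inner_vec_sum: "(x::real^'n::finite) \<bullet> y = (\<Sum>k\<in>UNIV. x $ k * y $ k)"
  by (simp add: inner_vec_def)

lemma laplacian_inner_pow:
  "laplacian (inner_pow x a) \<beta> = real a * (real a - 1) * (x \<bullet> x) * inner_pow x (a - 2) \<beta>"
proof (cases "mdeg \<beta> + 2 = a")
  case True
  have cancel: "0 < b1 \<Longrightarrow> 0 < b2 \<Longrightarrow> 0 < m \<Longrightarrow> b1 * b2 * (F / (m * b1 * b2) * (P * X\<^sup>2)) = F / m * P * (X * X)"
    for b1 b2 m F P X :: real by (simp add: field_simps power2_eq_square)
  have "laplacian (inner_pow x a) \<beta> = (\<Sum>k\<in>UNIV. fact a / mfact \<beta> * mpow x \<beta> * (x $ k * x $ k))"
    unfolding laplacian_def inner_pow_def mdeg_fun_upd_add mfact_fun_upd_add2 mpow_fun_upd_add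
    by (intro sum.cong refl, simp only: True simp_thms if_True) (rule cancel, simp_all add: mfact_pos)
  also have "\<dots> = fact a / mfact \<beta> * mpow x \<beta> * (x \<bullet> x)"
    by (simp add: inner_vec_sum sum_distrib_left)
  also have "\<dots> = real a * (real a - 1) * (x \<bullet> x) * inner_pow x (a - 2) \<beta>"
  proof -
    obtain b where b: "a = b + 2" "mdeg \<beta> = b" using True by auto
    then have "(fact a :: real) = real a * (real a - 1) * fact b"
      by (simp add: numeral_2_eq_2 algebra_simps)
    then show ?thesis unfolding inner_pow_def using b by simp
  qed
  finally show ?thesis .
next
  case False
  then have "laplacian (inner_pow x a) \<beta> = 0"
    unfolding laplacian_def inner_pow_def mdeg_fun_upd_add by simp
  moreover have "a = 0 \<or> a = 1 \<or> inner_pow x (a - 2) \<beta> = 0"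
    using False unfolding inner_pow_def by auto
  ultimately show ?thesis by auto
qed

lemma eval_mult_sqnorm: "eval_form (d + 2) (mult_sqnorm q) y = (y \<bullet> y) * eval_form d q y"
proof -
  have "eval_form (d + 2) (mult_sqnorm q) y = (\<Sum>k\<in>UNIV. \<Sum>\<alpha>\<in>exponents (d + 2).
      if 2 \<le> \<alpha> k then q (\<alpha>(k := \<alpha> k - 2)) * mpow y \<alpha> else 0)"
    unfolding eval_form_def mult_sqnorm_def sum_distrib_right by (subst sum.swap) (intro sum.cong refl, simp)
  also have "\<dots> = (\<Sum>k\<in>UNIV. \<Sum>\<beta>\<in>exponents d. q \<beta> * (mpow y \<beta> * (y $ k * y $ k)))"
    by (subst sum_exponents_shift, intro sum.cong refl, simp only: mpow_fun_upd_add)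
      (simp add: power2_eq_square)
  also have "\<dots> = (y \<bullet> y) * eval_form d q y"
    unfolding eval_form_def inner_vec_sum sum_distrib_right sum_distrib_left
    by (subst sum.swap) (simp add: algebra_simps)
  finally show ?thesis .
qed

lemma eval_mult_sqnorm_iter:
  "eval_form (d + 2 * j) ((mult_sqnorm ^^ j) q) y = (y \<bullet> y) ^ j * eval_form d q y"
proof (induction j)
  case (Suc j)
  have "eval_form (d + 2 * Suc j) ((mult_sqnorm ^^ Suc j) q) y
      = eval_form ((d + 2 * j) + 2) (mult_sqnorm ((mult_sqnorm ^^ j) q)) y"
    by simp
  also have "\<dots> = (y \<bullet> y) * eval_form (d + 2 * j) ((mult_sqnorm ^^ j) q) y"
    by (rule eval_mult_sqnorm)
  finally show ?case using Suc by simp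
qed simp

lemma eval_mult_inner: "eval_form (d + 1) (mult_inner x q) y = (x \<bullet> y) * eval_form d q y"
proof -
  have "eval_form (d + 1) (mult_inner x q) y = (\<Sum>k\<in>UNIV. \<Sum>\<alpha>\<in>exponents (d + 1).
      if 1 \<le> \<alpha> k then x $ k * q (\<alpha>(k := \<alpha> k - 1)) * mpow y \<alpha> else 0)"
    unfolding eval_form_def mult_inner_def sum_distrib_right by (subst sum.swap) (intro sum.cong refl, simp)
  also have "\<dots> = (\<Sum>k\<in>UNIV. \<Sum>\<beta>\<in>exponents d. x $ k * q \<beta> * (mpow y \<beta> * y $ k))"
    by (subst sum_exponents_shift, intro sum.cong refl, simp only: mpow_fun_upd_add) simp
  also have "\<dots> = (x \<bullet> y) * eval_form d q y"
    unfolding eval_form_def inner_vec_sum sum_distrib_right sum_distrib_left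
    by (subst sum.swap) (simp add: algebra_simps)
  finally show ?thesis .
qed

lemma mult_inner_inner_pow:
  fixes x :: "real^'n::finite"
  shows "mult_inner x (inner_pow x a) = inner_pow x (Suc a)"
proof
  fix \<alpha> :: "'n \<Rightarrow> nat"
  have summand: "(if 1 \<le> \<alpha> k then x $ k * inner_pow x a (\<alpha>(k := \<alpha> k - 1)) else 0)
    = (if mdeg \<alpha> = Suc a then fact a * real (\<alpha> k) / mfact \<alpha> * mpow x \<alpha> else 0)" for k
  proof (cases "1 \<le> \<alpha> k")
    case True
    define \<gamma> where "\<gamma> = \<alpha>(k := \<alpha> k - 1)"
    have \<alpha>: "\<alpha> = \<gamma>(k := \<gamma> k + 1)" using True unfolding \<gamma>_def by (auto simp: fun_eq_iff)
    then have "mfact \<alpha> = mfact \<gamma> * real (\<alpha> k)" "mpow x \<alpha> = mpow x \<gamma> * x $ k"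
      using mfact_fun_upd_Suc[of \<gamma> k] mpow_fun_upd_add[of x \<gamma> k 1] True by (auto simp: \<gamma>_def)
    moreover have "mdeg \<alpha> = mdeg \<gamma> + 1"
      using mdeg_fun_upd_diff[of 1 \<alpha> k] True unfolding \<gamma>_def by simp
    ultimately show ?thesis using True mfact_pos[of \<gamma>] unfolding inner_pow_def \<gamma>_def[symmetric]
      by (simp add: field_simps)
  qed simp
  have "(\<Sum>k\<in>UNIV. fact a * real (\<alpha> k) / mfact \<alpha> * mpow x \<alpha>) = fact a * real (mdeg \<alpha>) / mfact \<alpha> * mpow x \<alpha>"
    unfolding mdeg_def by (simp add: sum_distrib_left sum_distrib_right sum_divide_distrib[symmetric])
  then show "mult_inner x (inner_pow x a) \<alpha> = inner_pow x (Suc a) \<alpha>"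
    unfolding mult_inner_def summand by (simp add: inner_pow_def algebra_simps)
qed

lemma eval_inner_pow: "eval_form a (inner_pow x a) y = (x \<bullet> y) ^ a"
proof (induction a)
  case 0
  show ?case unfolding eval_form_def exponents_0 inner_pow_def by (simp add: mdeg_def mfact_def mpow_def)
next
  case (Suc a)
  then show ?case using eval_mult_inner[of a x "inner_pow x a" y] by (simp add: mult_inner_inner_pow)
qed

lemma fischer_inner_pow: "fischer a p (inner_pow y a) = fact a * eval_form a p y"
  unfolding fischer_def eval_form_def inner_pow_def exponents_def sum_distrib_left
  using mfact_pos by (intro sum.cong refl) (simp add: field_simps)

section \<open>Positive definiteness of the Gegenbauer polynomials\<close>

lemma geg_coeff_harmonic:
  assumes "2 \<le> n" "m + 2 \<le> i"
  shows "real (m + 2) * real (m + 1) * coeff (geg n i) (m + 2)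
    + real ((i - m) div 2) * (2 * real n + 4 * real m + 4 * real ((i - m) div 2) - 4) * coeff (geg n i) m = 0"
proof (cases "even (i - m)")
  case True
  then obtain j where i: "i = m + 2 * j" using assms(2) by (metis dvd_def le_add_diff_inverse add_leD1)
  show ?thesis
    using geg_coeff_recurrence[OF assms(1), of m i] unfolding i by (simp add: algebra_simps)
next
  case False
  then show ?thesis using assms(2) by (simp add: coeff_geg_odd)
qed

text \<open>The zonal harmonic \<open>y \<mapsto> |y|\<^sup>i P\<^sub>i(x \<bullet> y / |y|)\<close>; the summands with \<open>i - m\<close> odd vanish.\<close>

definition zonal :: "nat \<Rightarrow> real^'n::finite \<Rightarrow> 'n form" where
  "zonal i x \<alpha> = (\<Sum>m\<le>i. coeff (geg CARD('n) i) m * (mult_sqnorm ^^ ((i - m) div 2)) (inner_pow x m) \<alpha>)"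

lemma laplacian_mult_sqnorm_iter_inner_pow:
  fixes x :: "real^'n::finite"
  assumes "x \<bullet> x = 1"
  shows "laplacian ((mult_sqnorm ^^ j) (inner_pow x m)) \<beta>
    = real m * (real m - 1) * (mult_sqnorm ^^ j) (inner_pow x (m - 2)) \<beta>
      + real j * (2 * real CARD('n) + 4 * real m + 4 * real j - 4) * (mult_sqnorm ^^ (j - 1)) (inner_pow x m) \<beta>"
proof -
  have lap: "laplacian (inner_pow x m) = (\<lambda>\<gamma>. (real m * (real m - 1)) * inner_pow x (m - 2) \<gamma>)"
    using laplacian_inner_pow[of x m] assms by auto
  show ?thesis
    unfolding laplacian_mult_sqnorm_iter[OF homogeneous_inner_pow] lap mult_sqnorm_iter_scale by simp
qed

text \<open>Under the Laplacian, the summands \<open>m + 2\<close> and \<open>m\<close> of \<open>zonal i x\<close> both become multiples of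
  \<open>(mult_sqnorm ^^ ((i - m) div 2 - 1)) (inner_pow x m)\<close>, and the two factors cancel by
  \<open>geg_coeff_harmonic\<close>.\<close>

lemma laplacian_zonal:
  fixes x :: "real^'n::finite"
  assumes n: "2 \<le> CARD('n)" and x: "x \<bullet> x = 1"
  shows "laplacian (zonal i x) \<beta> = 0"
proof -
  define c where "c m = coeff (geg CARD('n) i) m" for m
  define j where "j m = (i - m) div 2" for m
  define A where "A m = c m * (real m * (real m - 1)) * (mult_sqnorm ^^ j m) (inner_pow x (m - 2)) \<beta>" for m
  define G where "G m = c m * (real (j m) * (2 * real CARD('n) + 4 * real m + 4 * real (j m) - 4))
    * (mult_sqnorm ^^ (j m - 1)) (inner_pow x m) \<beta>" for m
  have c_above: "c m = 0" if "i < m" for m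
    unfolding c_def using that by (intro coeff_eq_0 le_less_trans[OF degree_geg_le])
  have "laplacian (zonal i x) \<beta> = (\<Sum>m\<le>i. c m * laplacian ((mult_sqnorm ^^ j m) (inner_pow x m)) \<beta>)"
    unfolding zonal_def c_def j_def by (rule laplacian_lincomb)
  also have "\<dots> = (\<Sum>m\<le>i. A m + G m)"
    unfolding laplacian_mult_sqnorm_iter_inner_pow[OF x] A_def G_def
    by (intro sum.cong refl) (simp add: algebra_simps)
  also have "\<dots> = (\<Sum>m\<le>i. A m) + (\<Sum>m\<le>i. G m)"
    by (rule sum.distrib)
  also have "(\<Sum>m\<le>i. A m) = (\<Sum>m\<le>Suc (Suc i). A m)"
    using c_above[of "Suc i"] c_above[of "Suc (Suc i)"] unfolding A_def by simp
  also have "\<dots> = (\<Sum>m\<le>i. A (m + 2))"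
    unfolding sum.atMost_Suc_shift by (simp add: A_def)
  also have "(\<Sum>m\<le>i. A (m + 2)) + (\<Sum>m\<le>i. G m) = (\<Sum>m\<le>i. A (m + 2) + G m)"
    by (rule sum.distrib[symmetric])
  also have "\<dots> = 0"
  proof (intro sum.neutral ballI)
    fix m
    show "A (m + 2) + G m = 0"
    proof (cases "m + 2 \<le> i")
      case True
      then have "j (m + 2) = j m - 1" unfolding j_def by auto
      then have "A (m + 2) + G m = (real (m + 2) * real (m + 1) * c (m + 2)
          + real (j m) * (2 * real CARD('n) + 4 * real m + 4 * real (j m) - 4) * c m)
          * (mult_sqnorm ^^ (j m - 1)) (inner_pow x m) \<beta>"
        unfolding A_def G_def by (simp add: algebra_simps)
      then show ?thesis
        using geg_coeff_harmonic[OF n True] unfolding c_def j_def by simp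
    next
      case False
      then show ?thesis using c_above[of "m + 2"] unfolding A_def G_def j_def by simp
    qed
  qed
  finally show ?thesis .
qed

lemma eval_zonal:
  fixes x y :: "real^'n::finite"
  assumes n: "2 \<le> CARD('n)" and y: "y \<bullet> y = 1"
  shows "eval_form i (zonal i x) y = poly (geg CARD('n) i) (x \<bullet> y)"
proof -
  have "coeff (geg CARD('n) i) m * eval_form i ((mult_sqnorm ^^ ((i - m) div 2)) (inner_pow x m)) y
      = coeff (geg CARD('n) i) m * (x \<bullet> y) ^ m" if "m \<le> i" for m
  proof (cases "even (i - m)")
    case True
    then have "i = m + 2 * ((i - m) div 2)" using that by simp
    then have "eval_form i ((mult_sqnorm ^^ ((i - m) div 2)) (inner_pow x m)) y = (x \<bullet> y) ^ m"
      using eval_mult_sqnorm_iter[of m "(i - m) div 2" "inner_pow x m" y] y by (simp add: eval_inner_pow)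
    then show ?thesis by simp
  next
    case False
    then show ?thesis using that by (simp add: coeff_geg_odd)
  qed
  then have "eval_form i (zonal i x) y = (\<Sum>m\<le>i. coeff (geg CARD('n) i) m * (x \<bullet> y) ^ m)"
    unfolding zonal_def eval_form_lincomb by (intro sum.cong) auto
  then show ?thesis
    by (simp add: poly_altdef degree_geg[OF n] algebra_simps)
qed

lemma fischer_zonal:
  fixes x y :: "real^'n::finite"
  assumes n: "2 \<le> CARD('n)" and x: "x \<bullet> x = 1" and y: "y \<bullet> y = 1"
  shows "fischer i (zonal i x) (zonal i y)
    = fact i * coeff (geg CARD('n) i) i * poly (geg CARD('n) i) (x \<bullet> y)"
proof -
  define c where "c m = coeff (geg CARD('n) i) m" for m
  have "c m * fischer i (zonal i x) ((mult_sqnorm ^^ ((i - m) div 2)) (inner_pow y m)) = 0"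
    if "m < i" for m
  proof (cases "even (i - m)")
    case True
    then obtain k where k: "i - m = 2 * k" by (rule evenE)
    with that obtain j where "k = Suc j" by (cases k) auto
    with k have j: "(i - m) div 2 = Suc j" and i: "i = (i - 2) + 2" by auto
    have "fischer i (zonal i x) ((mult_sqnorm ^^ ((i - m) div 2)) (inner_pow y m))
        = fischer ((i - 2) + 2) (zonal i x) (mult_sqnorm ((mult_sqnorm ^^ j) (inner_pow y m)))"
      unfolding j using i by simp
    also have "\<dots> = fischer (i - 2) (laplacian (zonal i x)) ((mult_sqnorm ^^ j) (inner_pow y m))"
      by (rule fischer_laplacian[symmetric])
    also have "\<dots> = 0"
      unfolding fischer_def laplacian_zonal[OF n x] by simp
    finally show ?thesis by simp
  next
    case False
    then show ?thesis using that by (simp add: c_def coeff_geg_odd)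
  qed
  then have "(\<Sum>m<i. c m * fischer i (zonal i x) ((mult_sqnorm ^^ ((i - m) div 2)) (inner_pow y m))) = 0"
    by (intro sum.neutral) simp
  then have "fischer i (zonal i x) (zonal i y) = c i * fischer i (zonal i x) (inner_pow y i)"
    unfolding zonal_def[of i y] c_def[symmetric] fischer_sum_right fischer_scale_right
    by (simp add: lessThan_Suc_atMost[symmetric])
  then show ?thesis
    unfolding fischer_inner_pow eval_zonal[OF n y] c_def by simp
qed

lemma moment_nonneg:
  fixes C :: "(real^'n::finite) set"
  assumes n: "2 \<le> CARD('n)" and C: "C \<subseteq> sphere 0 1"
  shows "moment i C \<ge> 0"
proof -
  define c where "c = fact i * coeff (geg CARD('n) i) i"
  have "c > 0" using lead_coeff_geg_pos[OF n] by (simp add: c_def)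
  have unit: "x \<bullet> x = 1" if "x \<in> C" for x
    using C that by (auto simp: norm_eq_1[symmetric])
  have "c * moment i C = fischer i (\<lambda>\<alpha>. \<Sum>x\<in>C. zonal i x \<alpha>) (\<lambda>\<alpha>. \<Sum>y\<in>C. zonal i y \<alpha>)"
    unfolding moment_def fischer_sum_left fischer_sum_right sum_distrib_left
    by (intro sum.cong refl) (simp add: fischer_zonal[OF n] unit c_def)
  then show ?thesis
    using fischer_self_nonneg \<open>c > 0\<close> by (metis zero_le_mult_iff not_less)
qed

section \<open>Linear programming bounds\<close>

abbreviation off_diag :: "'a set \<Rightarrow> ('a \<times> 'a) set" where
  "off_diag C \<equiv> {(x, y). x \<in> C \<and> y \<in> C \<and> x \<noteq> y}"

lemma sum_square_split_diag:
  assumes "finite C"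
  shows "(\<Sum>x\<in>C. \<Sum>y\<in>C. g x y) = (\<Sum>x\<in>C. g x x) + (\<Sum>(x, y)\<in>off_diag C. g x y)"
proof -
  have "(\<Sum>x\<in>C. \<Sum>y\<in>C. g x y) = (\<Sum>x\<in>C. g x x + (\<Sum>y\<in>C - {x}. g x y))"
    using assms by (intro sum.cong refl) (simp add: sum.remove)
  also have "\<dots> = (\<Sum>x\<in>C. g x x) + (\<Sum>(x, y)\<in>Sigma C (\<lambda>x. C - {x}). g x y)"
    using assms by (simp add: sum.distrib sum.Sigma)
  also have "Sigma C (\<lambda>x. C - {x}) = off_diag C" by auto
  finally show ?thesis .
qed

lemma inner_sphere_bounds:
  fixes x y :: "'a::real_inner"
  assumes "x \<in> sphere 0 1" "y \<in> sphere 0 1"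
  shows "x \<bullet> y \<in> {-1..1}"
  using Cauchy_Schwarz_ineq2[of x y] assms by (simp add: abs_le_iff)

lemma sum_poly_inner_eq_moments:
  fixes C :: "(real^'n::finite) set"
  assumes "2 \<le> CARD('n)"
  shows "(\<Sum>x\<in>C. \<Sum>y\<in>C. poly f (x \<bullet> y)) = (\<Sum>i\<le>degree f. geg_coeff CARD('n) f i * moment i C)"
proof -
  have "(\<Sum>x\<in>C. \<Sum>y\<in>C. poly f (x \<bullet> y))
      = (\<Sum>x\<in>C. \<Sum>y\<in>C. \<Sum>i\<le>degree f. geg_coeff CARD('n) f i * poly (geg CARD('n) i) (x \<bullet> y))"
    by (intro sum.cong refl) (rule poly_geg_expansion[OF assms])
  also have "\<dots> = (\<Sum>x\<in>C. \<Sum>i\<le>degree f. \<Sum>y\<in>C. geg_coeff CARD('n) f i * poly (geg CARD('n) i) (x \<bullet> y))"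
    by (intro sum.cong refl) (rule sum.swap)
  also have "\<dots> = (\<Sum>i\<le>degree f. \<Sum>x\<in>C. \<Sum>y\<in>C. geg_coeff CARD('n) f i * poly (geg CARD('n) i) (x \<bullet> y))"
    by (rule sum.swap)
  finally show ?thesis
    unfolding moment_def by (simp add: sum_distrib_left)
qed

lemma moment_0: "moment 0 C = real (card C) ^ 2"
  unfolding moment_def by (simp add: power2_eq_square)

lemma kk_design_moment_eq_0:
  assumes "kk_design k C" "even i" "1 \<le> i" "i \<le> 2 * k"
  shows "moment i C = 0"
  using assms unfolding kk_design_def by (auto elim!: evenE)

lemma F_class_coeff_moment_nonpos:
  fixes C :: "(real^'n::finite) set"
  assumes "2 \<le> CARD('n)" "f \<in> F_class CARD('n) k" "kk_design k C" "1 \<le> i"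
  shows "geg_coeff CARD('n) f i * moment i C \<le> 0"
proof (cases "even i \<and> i \<le> 2 * k")
  case True
  then show ?thesis using kk_design_moment_eq_0[OF assms(3) _ assms(4)] by simp
next
  case False
  then have "(odd i \<and> i < 2 * k) \<or> 2 * k + 1 \<le> i" by (cases "i = 2 * k") auto
  then have "geg_coeff CARD('n) f i \<le> 0"
    using assms(2) unfolding F_class_def by blast
  moreover have "moment i C \<ge> 0"
    using assms(1,3) by (intro moment_nonneg) (auto simp: kk_design_def spherical_code_def)
  ultimately show ?thesis by (simp add: mult_nonpos_nonneg)
qed

lemma G_class_coeff_moment_nonneg:
  fixes C :: "(real^'n::finite) set"
  assumes "2 \<le> CARD('n)" "f \<in> G_class CARD('n) k" "kk_design k C" "1 \<le> i"
  shows "geg_coeff CARD('n) f i * moment i C \<ge> 0"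
proof (cases "even i \<and> i \<le> 2 * k")
  case True
  then show ?thesis using kk_design_moment_eq_0[OF assms(3) _ assms(4)] by simp
next
  case False
  then have "(odd i \<and> i < 2 * k) \<or> 2 * k + 1 \<le> i" by (cases "i = 2 * k") auto
  then have "geg_coeff CARD('n) f i \<ge> 0"
    using assms(2) unfolding G_class_def by blast
  moreover have "moment i C \<ge> 0"
    using assms(1,3) by (intro moment_nonneg) (auto simp: kk_design_def spherical_code_def)
  ultimately show ?thesis by simp
qed

lemma offdiag_sum_poly_inner:
  fixes C :: "(real^'n::finite) set"
  assumes n: "2 \<le> CARD('n)" and C: "finite C" "C \<subseteq> sphere 0 1"
  shows "(\<Sum>(x, y)\<in>off_diag C. poly f (x \<bullet> y))
    = geg_coeff CARD('n) f 0 * real (card C) ^ 2 - real (card C) * poly f 1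
      + (\<Sum>i\<in>{1..degree f}. geg_coeff CARD('n) f i * moment i C)"
proof -
  have "(\<Sum>x\<in>C. poly f (x \<bullet> x)) = (\<Sum>x\<in>C. poly f 1)"
    using C(2) by (intro sum.cong refl) (auto simp: subset_iff norm_eq_1)
  moreover have "(\<Sum>i\<le>degree f. geg_coeff CARD('n) f i * moment i C)
      = geg_coeff CARD('n) f 0 * real (card C) ^ 2 + (\<Sum>i\<in>{1..degree f}. geg_coeff CARD('n) f i * moment i C)"
    by (simp add: sum.remove[of _ 0] atLeast1_atMost_eq_remove0 moment_0)
  ultimately show ?thesis
    using sum_square_split_diag[OF C(1), of "\<lambda>x y. poly f (x \<bullet> y)"] sum_poly_inner_eq_moments[OF n, of f C]
    by simp
qed

lemma F_class_offdiag_sum_le: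
  fixes C :: "(real^'n::finite) set"
  assumes n: "2 \<le> CARD('n)" and f: "f \<in> F_class CARD('n) k" and C: "kk_design k C"
  shows "(\<Sum>(x, y)\<in>off_diag C. poly f (x \<bullet> y)) \<le> real (card C) * (geg_coeff CARD('n) f 0 * real (card C) - poly f 1)"
proof -
  have "(\<Sum>i\<in>{1..degree f}. geg_coeff CARD('n) f i * moment i C) \<le> 0"
    using F_class_coeff_moment_nonpos[OF n f C] by (intro sum_nonpos) simp
  then show ?thesis
    using C offdiag_sum_poly_inner[OF n, of C f]
    by (simp add: kk_design_def spherical_code_def power2_eq_square algebra_simps)
qed

lemma G_class_offdiag_sum_ge:
  fixes C :: "(real^'n::finite) set"
  assumes n: "2 \<le> CARD('n)" and f: "f \<in> G_class CARD('n) k" and C: "kk_design k C"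
  shows "(\<Sum>(x, y)\<in>off_diag C. poly f (x \<bullet> y)) \<ge> real (card C) * (geg_coeff CARD('n) f 0 * real (card C) - poly f 1)"
proof -
  have "(\<Sum>i\<in>{1..degree f}. geg_coeff CARD('n) f i * moment i C) \<ge> 0"
    using G_class_coeff_moment_nonneg[OF n f C] by (intro sum_nonneg) simp
  then show ?thesis
    using C offdiag_sum_poly_inner[OF n, of C f]
    by (simp add: kk_design_def spherical_code_def power2_eq_square algebra_simps)
qed

lemma h_energy_ge_offdiag_sum:
  fixes C :: "(real^'n::finite) set"
  assumes "C \<subseteq> sphere 0 1" "\<forall>t\<in>{-1..1}. ereal (poly f t) \<le> h t"
  shows "ereal (\<Sum>(x, y)\<in>off_diag C. poly f (x \<bullet> y)) \<le> h_energy h C"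
proof -
  have "ereal (poly f (x \<bullet> y)) \<le> h (x \<bullet> y)" if "x \<in> C" "y \<in> C" for x y
  proof -
    have "x \<bullet> y \<in> {-1..1}" using assms(1) that by (intro inner_sphere_bounds) auto
    with assms(2) show ?thesis by blast
  qed
  then show ?thesis unfolding h_energy_def sum_ereal[symmetric] by (intro sum_mono) auto
qed

lemma h_energy_le_offdiag_sum:
  fixes C :: "(real^'n::finite) set"
  assumes "C \<subseteq> sphere 0 1" "\<forall>t\<in>{-1..1}. h t \<le> ereal (poly f t)"
  shows "h_energy h C \<le> ereal (\<Sum>(x, y)\<in>off_diag C. poly f (x \<bullet> y))"
proof -
  have "h (x \<bullet> y) \<le> ereal (poly f (x \<bullet> y))" if "x \<in> C" "y \<in> C" for x y
  proof -
    have "x \<bullet> y \<in> {-1..1}" using assms(1) that by (intro inner_sphere_bounds) auto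
    with assms(2) show ?thesis by blast
  qed
  then show ?thesis unfolding h_energy_def sum_ereal[symmetric] by (intro sum_mono) auto
qed

lemma min_design_size_ge:
  assumes n: "2 \<le> CARD('n::finite)" and f: "f \<in> M_class CARD('n) k"
  shows "min_design_size TYPE('n) k \<ge> ereal (poly f 1 / geg_coeff CARD('n) f 0)"
  unfolding min_design_size_def
proof (rule Inf_greatest, clarify)
  fix C :: "(real^'n) set" assume C: "kk_design k C"
  then have "finite C" "C \<noteq> {}" "C \<subseteq> sphere 0 1" unfolding kk_design_def spherical_code_def by auto
  have "0 \<le> poly f (x \<bullet> y)" if "x \<in> C" "y \<in> C" for x y
  proof -
    have "x \<bullet> y \<in> {-1..1}" using \<open>C \<subseteq> sphere 0 1\<close> that by (intro inner_sphere_bounds) auto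
    with f show ?thesis unfolding M_class_def by blast
  qed
  then have "0 \<le> (\<Sum>(x, y)\<in>off_diag C. poly f (x \<bullet> y))"
    by (intro sum_nonneg) auto
  also have "\<dots> \<le> real (card C) * (geg_coeff CARD('n) f 0 * real (card C) - poly f 1)"
    using f F_class_offdiag_sum_le[OF n _ C] unfolding M_class_def by blast
  finally have "poly f 1 \<le> geg_coeff CARD('n) f 0 * real (card C)"
    using \<open>finite C\<close> \<open>C \<noteq> {}\<close> by (simp add: zero_le_mult_iff card_gt_0_iff)
  moreover have "geg_coeff CARD('n) f 0 > 0" using f unfolding M_class_def F_class_def by simp
  ultimately show "ereal (poly f 1 / geg_coeff CARD('n) f 0) \<le> ereal (real (card C))"
    by (simp add: divide_le_eq mult.commute)
qed

lemma lower_energy_ge: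
  assumes n: "2 \<le> CARD('n::finite)" and f: "f \<in> L_class CARD('n) k h"
  shows "lower_energy TYPE('n) h k M \<ge> ereal (real M * (geg_coeff CARD('n) f 0 * real M - poly f 1))"
  unfolding lower_energy_def
proof (rule Inf_greatest)
  fix z assume "z \<in> {h_energy h C | C :: (real^'n) set. kk_design k C \<and> card C = M}"
  then obtain C :: "(real^'n) set" where C: "kk_design k C" and "card C = M" and z: "z = h_energy h C"
    by blast
  then have "ereal (real M * (geg_coeff CARD('n) f 0 * real M - poly f 1))
      \<le> ereal (\<Sum>(x, y)\<in>off_diag C. poly f (x \<bullet> y))"
    using f G_class_offdiag_sum_ge[OF n _ C] unfolding L_class_def by simp
  also have "\<dots> \<le> h_energy h C"
    using f C by (intro h_energy_ge_offdiag_sum) (auto simp: L_class_def kk_design_def spherical_code_def)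
  finally show "ereal (real M * (geg_coeff CARD('n) f 0 * real M - poly f 1)) \<le> z"
    unfolding z .
qed

lemma upper_energy_le:
  assumes n: "2 \<le> CARD('n::finite)" and f: "f \<in> U_class CARD('n) k h"
  shows "upper_energy TYPE('n) h k M \<le> ereal (real M * (geg_coeff CARD('n) f 0 * real M - poly f 1))"
  unfolding upper_energy_def
proof (rule Sup_least)
  fix z assume "z \<in> {h_energy h C | C :: (real^'n) set. kk_design k C \<and> card C = M}"
  then obtain C :: "(real^'n) set" where C: "kk_design k C" and "card C = M" and z: "z = h_energy h C"
    by blast
  have "h_energy h C \<le> ereal (\<Sum>(x, y)\<in>off_diag C. poly f (x \<bullet> y))"
    using f C by (intro h_energy_le_offdiag_sum) (auto simp: U_class_def kk_design_def spherical_code_def)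
  also have "\<dots> \<le> ereal (real M * (geg_coeff CARD('n) f 0 * real M - poly f 1))"
    using f F_class_offdiag_sum_le[OF n _ C] \<open>card C = M\<close> unfolding U_class_def by simp
  finally show "z \<le> ereal (real M * (geg_coeff CARD('n) f 0 * real M - poly f 1))"
    unfolding z .
qed

theorem mainTheorem1:
  fixes k :: nat
  assumes "CARD('n::finite) \<ge> 2" and "k \<ge> 1"
  shows "(\<forall>f \<in> M_class CARD('n) k.
            min_design_size TYPE('n) k \<ge> ereal (poly f 1 / geg_coeff CARD('n) f 0))
       \<and> (\<forall>(M::nat) (h::real \<Rightarrow> ereal). M \<ge> 2 \<longrightarrow> (\<forall>t\<in>{-1..1}. h t \<ge> 0) \<longrightarrow>
            (\<forall>f \<in> L_class CARD('n) k h.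
               lower_energy TYPE('n) h k M \<ge>
                 ereal (real M * (geg_coeff CARD('n) f 0 * real M - poly f 1))))
       \<and> (\<forall>(M::nat) (h::real \<Rightarrow> ereal). M \<ge> 2 \<longrightarrow> (\<forall>t\<in>{-1..1}. h t \<ge> 0) \<longrightarrow>
            (\<forall>f \<in> U_class CARD('n) k h.
               upper_energy TYPE('n) h k M \<le>
                 ereal (real M * (geg_coeff CARD('n) f 0 * real M - poly f 1))))"
  using min_design_size_ge[OF assms(1)] lower_energy_ge[OF assms(1)] upper_energy_le[OF assms(1)]
  by blast

end
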